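(* Under the assumptions of the semi-offline identification result (no direct effect, MAR $\pi_\beta(R\mid X_{(1)})=\pi_\beta(R\mid X_o)$, consistency, no interference, static features, semi-offline positivity), if the Q-function model equals the true semi-offline Q-function $Q_{Semi}$, then $\mathbb{E}_{p'}[V^0_{Semi}]=J$, where $V^0_{Semi}=\sum_{A'^1}Q_{Semi}(\underline X'^0,A'^1,X_o)\pi_\alpha(A'^1\mid \underline X'^0)$; hence the direct-method estimator $J_{DM\text{-}Semi}=\hat{\mathbb{E}}_{n'}[V^0_{Semi}]$ is consistent for $J$.
   Context: Setting: full features $X_{(1)}$ (finitely valued), label $Y$, missingness $R$ with mechanism $\pi_\beta$, $X_o$ always-observed coordinates; AFA policy $\pi_\alpha$ with acquire/stop actions, histories $\underline X^t=(X^0,\dots,X^t)$, $\underline A^t=(A^1,\dots,A^t)$; target $J=\mathbb{E}[C_{(\pi_\alpha)}]$ (expected misclassification cost under $\pi_\alpha$ and a fixed deterministic classifier). Semi-offline sampling distribution $p'$: $(X_{(1)},Y,R)\sim p$, actions from a blocked simulation policy $\pi'_{sim}(\cdot\mid\underline X'^{t-1},\underline A'^{t-1},R)$ that never acquires features with $R_i=0$ and otherwise has positive probability wherever the simulation policy $\pi_{sim}$ does ($\pi_{sim}$ satisfying off-policy positivity w.r.t. $\pi_\alpha$), revealed features $X'^t=X_{(1),A'^t}$, simulated cost $C'$. Semi-offline positivity: if a trajectory $(\underline x'^{T-1},\underline a'^T,x_o)$ has positive probability under $\pi_\alpha$ and the feature distribution, then $\pi_\beta(R\ge r'\mid x_o)>0$,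 with $r'$ the indicator of acquired features. The true semi-offline Q-function is $Q_{Semi}(\underline X'^{t-1},\underline A'^t,X_o)=\mathbb{E}_{p'}[C'_{(\overline\pi^{t+1}_\alpha)}\mid\underline X'^{t-1},\underline A'^t,X_o]$, where $C'_{(\overline\pi^{t+1}_\alpha)}$ is the potential outcome of $C'$ had actions from step $t+1$ onward followed $\pi_\alpha$. *)

theory Defs
  imports "HOL-Probability.Probability"
begin

text \<open>
  Features are indexed by a finite type 'f, feature values lie in a finite type 'v,
  labels in a finite type 'y.  Obs is the set of always-observed coordinates.
  A history is a list of steps (action, revealed value): an acquisition of feature i is
  recorded as (Some i, Some (x i)) (consistency / static features), the stop action as
  (None, None), after which the episode ends.
  A policy maps the initial observation X^0 = X_o (a partial map defined on Obs) and the
  history so far to a distribution over actions (Some i = acquire i, None = stop).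
\<close>

type_synonym ('f, 'v) hist = "('f option \<times> 'v option) list"
type_synonym ('f, 'v) policy = "('f \<Rightarrow> 'v option) \<Rightarrow> ('f, 'v) hist \<Rightarrow> 'f option pmf"

definition obs :: "'f set \<Rightarrow> ('f \<Rightarrow> 'v) \<Rightarrow> 'f \<Rightarrow> 'v option" where
  "obs Obs x = (\<lambda>i. if i \<in> Obs then Some (x i) else None)"

fun run :: "'f set \<Rightarrow> ('f, 'v) policy \<Rightarrow> ('f \<Rightarrow> 'v) \<Rightarrow> nat \<Rightarrow> ('f, 'v) hist \<Rightarrow> ('f, 'v) hist pmf" where
  "run Obs \<pi> x 0 h = return_pmf h"
| "run Obs \<pi> x (Suc n) h =
     bind_pmf (\<pi> (obs Obs x) h)
       (\<lambda>a. case a of None \<Rightarrow> return_pmf (h @ [(None, None)])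
                   | Some i \<Rightarrow> run Obs \<pi> x n (h @ [(Some i, Some (x i))]))"

definition acquired :: "('f, 'v) hist \<Rightarrow> 'f set" where
  "acquired \<tau> = {i. \<exists>v. (Some i, v) \<in> set \<tau>}"

text \<open>Target: expected cost J = E[C_(pi_alpha)], with (X,Y) ~ pXY and the cost
  C = Cost X_o (trajectory) Y (e.g. misclassification cost of a fixed deterministic
  classifier applied to the observed features, plus acquisition costs).\<close>
definition J_val ::
  "'f set \<Rightarrow> nat \<Rightarrow> (('f \<Rightarrow> 'v) \<times> 'y) pmf \<Rightarrow> ('f, 'v) policy
   \<Rightarrow> (('f \<Rightarrow> 'v option) \<Rightarrow> ('f, 'v) hist \<Rightarrow> 'y \<Rightarrow> real) \<Rightarrow> real" where
  "J_val Obs T pXY \<pi>\<^sub>\<alpha> Cost =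
     measure_pmf.expectation pXY
       (\<lambda>(x, y). measure_pmf.expectation (run Obs \<pi>\<^sub>\<alpha> x T []) (\<lambda>\<tau>. Cost (obs Obs x) \<tau> y))"

text \<open>Semi-offline sampling distribution p': (X,Y) ~ pXY, R ~ pi_beta(. | X) (no direct
  effect of Y on R), then a simulated trajectory from the blocked simulation policy,
  which may depend on R.\<close>
definition psemi ::
  "'f set \<Rightarrow> nat \<Rightarrow> (('f \<Rightarrow> 'v) \<times> 'y) pmf \<Rightarrow> (('f \<Rightarrow> 'v) \<Rightarrow> 'f set pmf)
   \<Rightarrow> ('f set \<Rightarrow> ('f, 'v) policy) \<Rightarrow> (('f \<Rightarrow> 'v) \<times> 'y \<times> 'f set \<times> ('f, 'v) hist) pmf" where
  "psemi Obs T pXY \<beta> \<pi>sim' =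
     bind_pmf pXY (\<lambda>(x, y). bind_pmf (\<beta> x) (\<lambda>r.
       map_pmf (\<lambda>\<tau>. (x, y, r, \<tau>)) (run Obs (\<pi>sim' r) x T [])))"

text \<open>Conditional mean of the potential outcome C'_(pi_alpha from step t+1) given the
  first t simulated steps ht = (X'^1..X'^t, A'^1..A'^t): if the t-th action was stop the
  episode is over, otherwise the trajectory is continued with pi_alpha (with fresh,
  independent policy randomisation) for the remaining T - t steps.\<close>
definition po_mean ::
  "'f set \<Rightarrow> nat \<Rightarrow> ('f, 'v) policy \<Rightarrow> (('f \<Rightarrow> 'v option) \<Rightarrow> ('f, 'v) hist \<Rightarrow> 'y \<Rightarrow> real)
   \<Rightarrow> ('f \<Rightarrow> 'v) \<Rightarrow> 'y \<Rightarrow> ('f, 'v) hist \<Rightarrow> real" where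
  "po_mean Obs T \<pi>\<^sub>\<alpha> Cost x y ht =
     (if ht \<noteq> [] \<and> fst (last ht) = None then Cost (obs Obs x) ht y
      else measure_pmf.expectation (run Obs \<pi>\<^sub>\<alpha> x (T - length ht) ht) (\<lambda>\<tau>. Cost (obs Obs x) \<tau> y))"

definition qevent ::
  "'f set \<Rightarrow> ('f, 'v) hist \<Rightarrow> 'f option \<Rightarrow> ('f \<Rightarrow> 'v option)
   \<Rightarrow> (('f \<Rightarrow> 'v) \<times> 'y \<times> 'f set \<times> ('f, 'v) hist) set" where
  "qevent Obs h a x0 = {(x, y, r, \<tau>). obs Obs x = x0 \<and> length h < length \<tau> \<and>
       take (length h) \<tau> = h \<and> fst (\<tau> ! length h) = a}"

text \<open>True semi-offline Q-function
  Q_Semi(h, a, x0) = E_{p'}[C'_(pi_alpha from t+1) | history h, A'^t = a, X_o = x0]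
  (set to 0 on conditioning events of p'-probability zero).\<close>
definition Q_semi ::
  "'f set \<Rightarrow> nat \<Rightarrow> (('f \<Rightarrow> 'v) \<times> 'y) pmf \<Rightarrow> (('f \<Rightarrow> 'v) \<Rightarrow> 'f set pmf)
   \<Rightarrow> ('f set \<Rightarrow> ('f, 'v) policy) \<Rightarrow> ('f, 'v) policy
   \<Rightarrow> (('f \<Rightarrow> 'v option) \<Rightarrow> ('f, 'v) hist \<Rightarrow> 'y \<Rightarrow> real)
   \<Rightarrow> ('f, 'v) hist \<Rightarrow> 'f option \<Rightarrow> ('f \<Rightarrow> 'v option) \<Rightarrow> real" where
  "Q_semi Obs T pXY \<beta> \<pi>sim' \<pi>\<^sub>\<alpha> Cost h a x0 =
     (let p' = psemi Obs T pXY \<beta> \<pi>sim'; E = qevent Obs h a x0 in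
      if set_pmf p' \<inter> E = {} then 0
      else measure_pmf.expectation (cond_pmf p' E)
             (\<lambda>(x, y, r, \<tau>). po_mean Obs T \<pi>\<^sub>\<alpha> Cost x y (take (Suc (length h)) \<tau>)))"

definition V0 :: "('f::finite, 'v) policy \<Rightarrow> (('f, 'v) hist \<Rightarrow> 'f option \<Rightarrow> ('f \<Rightarrow> 'v option) \<Rightarrow> real)
   \<Rightarrow> ('f \<Rightarrow> 'v option) \<Rightarrow> real" where
  "V0 \<pi>\<^sub>\<alpha> Qm x0 = (\<Sum>a\<in>UNIV. Qm [] a x0 * pmf (\<pi>\<^sub>\<alpha> x0 []) a)"

end

theory Submission
  imports Defs
begin

text \<open>
  Conditioning the semi-offline distribution on \<open>X_o\<close> and the first simulated action \<open>a\<close>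
  reweights the feature distribution by the probability that the blocked simulation policy
  starts with \<open>a\<close>. Under MAR this weight depends on the features only through \<open>X_o\<close>, so it
  cancels and \<open>Q_Semi(X'^0, a, X_o)\<close> is the plain conditional expectation, given \<open>X_o\<close>, of the
  cost of acting \<open>a\<close> first and following \<open>\<pi>\<^sub>\<alpha>\<close> afterwards; semi-offline positivity guarantees
  that the weight is nonzero wherever \<open>\<pi>\<^sub>\<alpha>\<close> may choose \<open>a\<close>. Averaging over \<open>\<pi>\<^sub>\<alpha>\<close>'s first action
  and applying the tower property gives \<open>E[V\<^sup>0] = J\<close>. The values \<open>V\<^sup>0\<close> of the i.i.d. samples are
  bounded (all types are finite), so Hoeffding's inequality yields consistency.
\<close>

lemma integral_pmf_eq_const:
  fixes f :: "'a \<Rightarrow> real"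
  assumes "\<And>x. x \<in> set_pmf p \<Longrightarrow> f x = c"
  shows "measure_pmf.expectation p f = c"
proof -
  have "measure_pmf.expectation p f = measure_pmf.expectation p (\<lambda>_. c)"
    using assms by (intro integral_cong_AE) (auto simp: AE_measure_pmf_iff)
  then show ?thesis by simp
qed

lemma integral_bind_pmf_finite:
  fixes f :: "'b \<Rightarrow> real"
  assumes fin_M: "finite (set_pmf M)" and fin_N: "\<And>x. x \<in> set_pmf M \<Longrightarrow> finite (set_pmf (N x))"
  shows "measure_pmf.expectation (bind_pmf M N) f
       = measure_pmf.expectation M (\<lambda>x. measure_pmf.expectation (N x) f)"
proof -
  define A where "A = set_pmf M"
  define B where "B = set_pmf (bind_pmf M N)"
  have fin_A: "finite A" and fin_B: "finite B"
    using assms by (auto simp: A_def B_def set_bind_pmf)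
  have N_B: "set_pmf (N x) \<subseteq> B" if "x \<in> A" for x
    using that by (auto simp: A_def B_def set_bind_pmf)
  have "measure_pmf.expectation (bind_pmf M N) f = (\<Sum>z\<in>B. f z * pmf (bind_pmf M N) z)"
    using fin_B by (intro integral_measure_pmf_real) (auto simp: B_def)
  also have "\<dots> = (\<Sum>z\<in>B. f z * (\<Sum>x\<in>A. pmf (N x) z * pmf M x))"
    unfolding pmf_bind using fin_A
    by (intro sum.cong refl arg_cong[where f = "(*) _"] integral_measure_pmf_real) (auto simp: A_def)
  also have "\<dots> = (\<Sum>x\<in>A. (\<Sum>z\<in>B. f z * pmf (N x) z) * pmf M x)"
    by (simp add: sum_distrib_left sum_distrib_right mult_ac sum.swap[of _ B])
  also have "\<dots> = (\<Sum>x\<in>A. measure_pmf.expectation (N x) f * pmf M x)"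
    using N_B fin_B by (intro sum.cong refl) (subst integral_measure_pmf_real[of B], auto)
  also have "\<dots> = measure_pmf.expectation M (\<lambda>x. measure_pmf.expectation (N x) f)"
    using fin_A by (subst integral_measure_pmf_real[of A]) (auto simp: A_def)
  finally show ?thesis .
qed

lemma integral_cond_pmf_finite:
  fixes f :: "'a \<Rightarrow> real"
  assumes fin: "finite (set_pmf p)" and ne: "set_pmf p \<inter> s \<noteq> {}"
  shows "measure_pmf.expectation (cond_pmf p s) f
       = measure_pmf.expectation p (\<lambda>z. indicator s z * f z) / measure_pmf.prob p s"
proof -
  have "measure_pmf.expectation (cond_pmf p s) f = (\<Sum>z\<in>set_pmf p. f z * pmf (cond_pmf p s) z)"
    using fin ne by (intro integral_measure_pmf_real) auto
  also have "\<dots> = (\<Sum>z\<in>set_pmf p. (indicator s z * f z) * pmf p z) / measure_pmf.prob p s"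
    unfolding sum_divide_distrib using ne by (intro sum.cong refl) (auto simp: pmf_cond indicator_def)
  also have "\<dots> = measure_pmf.expectation p (\<lambda>z. indicator s z * f z) / measure_pmf.prob p s"
    using fin by (subst integral_measure_pmf_real[of "set_pmf p"]) auto
  finally show ?thesis .
qed

lemma integral_cond_pmf_tower:
  fixes f :: "'a \<Rightarrow> real" and u :: "'b \<Rightarrow> real" and g :: "'a \<Rightarrow> 'b"
  assumes fin: "finite (set_pmf p)"
  shows "measure_pmf.expectation p (\<lambda>z. u (g z) * measure_pmf.expectation (cond_pmf p (g -` {g z})) f)
       = measure_pmf.expectation p (\<lambda>z. u (g z) * f z)"
proof -
  define A where "A = set_pmf p"
  define P where "P z = measure_pmf.prob p (g -` {g z})" for z
  define I where "I z z' = indicator (g -` {g z}) z' * pmf p z'" for z z' :: 'a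
  have fin_A: "finite A" using fin by (simp add: A_def)
  have P_sum: "P z = (\<Sum>z'\<in>A. I z z')" for z
  proof -
    have "P z = measure_pmf.expectation p (indicator (g -` {g z}))"
      by (simp add: P_def)
    also have "\<dots> = (\<Sum>z'\<in>A. I z z')"
      using fin_A by (subst integral_measure_pmf_real[of A]) (auto simp: A_def I_def)
    finally show ?thesis .
  qed
  have P_pos: "P z > 0" if "z \<in> A" for z
    using that measure_pmf_zero_iff[of p "g -` {g z}"] measure_nonneg[of "measure_pmf p"]
    unfolding P_def A_def by (metis IntI emptyE order_neq_le_trans vimage_singleton_eq)
  have cond: "measure_pmf.expectation (cond_pmf p (g -` {g z})) f = (\<Sum>z'\<in>A. I z z' * f z') / P z"
    if "z \<in> A" for z
  proof -
    have "set_pmf p \<inter> g -` {g z} \<noteq> {}" using that by (auto simp: A_def)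
    then have "measure_pmf.expectation (cond_pmf p (g -` {g z})) f
        = measure_pmf.expectation p (\<lambda>z'. indicator (g -` {g z}) z' * f z') / P z"
      by (simp add: integral_cond_pmf_finite[OF fin] P_def)
    also have "\<dots> = (\<Sum>z'\<in>A. I z z' * f z') / P z"
      using fin_A by (subst integral_measure_pmf_real[of A]) (auto simp: A_def I_def mult_ac)
    finally show ?thesis .
  qed
  have "measure_pmf.expectation p (\<lambda>z. u (g z) * measure_pmf.expectation (cond_pmf p (g -` {g z})) f)
      = (\<Sum>z\<in>A. u (g z) * ((\<Sum>z'\<in>A. I z z' * f z') / P z) * pmf p z)"
    using fin_A cond by (subst integral_measure_pmf_real[of A]) (auto simp: A_def)
  also have "\<dots> = (\<Sum>z\<in>A. \<Sum>z'\<in>A. I z' z * (u (g z') * f z' * pmf p z' / P z'))"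
    by (auto simp: sum_distrib_left sum_distrib_right sum_divide_distrib I_def P_def indicator_def
        intro!: sum.cong)
  also have "\<dots> = (\<Sum>z'\<in>A. P z' * (u (g z') * f z' * pmf p z' / P z'))"
    by (subst sum.swap) (simp add: P_sum sum_distrib_right sum_divide_distrib)
  also have "\<dots> = (\<Sum>z'\<in>A. u (g z') * f z' * pmf p z')"
    using P_pos by (intro sum.cong) (auto simp: less_le)
  also have "\<dots> = measure_pmf.expectation p (\<lambda>z. u (g z) * f z)"
    using fin_A by (subst integral_measure_pmf_real[of A]) (auto simp: A_def)
  finally show ?thesis .
qed

lemma finite_set_run: "finite (set_pmf (run Obs (\<pi> :: ('f::finite, 'v) policy) x n h))"
proof (induction n arbitrary: h)
  case (Suc n)
  show ?case
    unfolding run.simps set_bind_pmf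
    by (rule finite_UN_I) (auto split: option.splits intro: Suc)
qed simp

lemma set_run_prefix: "\<tau> \<in> set_pmf (run Obs \<pi> x n h) \<Longrightarrow> \<exists>ys. \<tau> = h @ ys"
proof (induction n arbitrary: h)
  case (Suc n)
  then show ?case
    by (auto simp: set_bind_pmf split: option.splits) (metis Suc.IH append_assoc)+
qed simp

lemma integral_run_Suc:
  fixes f :: "('f::finite, 'v) hist \<Rightarrow> real"
  shows "measure_pmf.expectation (run Obs \<pi> x (Suc n) h) f
       = (\<Sum>a\<in>UNIV. pmf (\<pi> (obs Obs x) h) a *
            (case a of None \<Rightarrow> f (h @ [(None, None)])
                     | Some i \<Rightarrow> measure_pmf.expectation (run Obs \<pi> x n (h @ [(Some i, Some (x i))])) f))"
proof -
  have "measure_pmf.expectation (run Obs \<pi> x (Suc n) h) f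
      = measure_pmf.expectation (\<pi> (obs Obs x) h)
          (\<lambda>a. case a of None \<Rightarrow> f (h @ [(None, None)])
                     | Some i \<Rightarrow> measure_pmf.expectation (run Obs \<pi> x n (h @ [(Some i, Some (x i))])) f)"
    unfolding run.simps
    by (subst integral_bind_pmf_finite)
       (auto intro!: finite_set_run Bochner_Integration.integral_cong split: option.splits)
  then show ?thesis
    by (subst (asm) integral_measure_pmf_real[of UNIV]) (auto simp: mult.commute)
qed

lemma integral_run_first_action:
  fixes \<phi> :: "('f::finite, 'v) hist \<Rightarrow> real"
  shows "measure_pmf.expectation (run Obs \<pi> x (Suc n) [])
          (\<lambda>\<tau>. if \<tau> \<noteq> [] \<and> fst (hd \<tau>) = a then \<phi> (take 1 \<tau>) else 0)
       = pmf (\<pi> (obs Obs x) []) a * \<phi> [(a, map_option x a)]"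
proof -
  have continuation: "measure_pmf.expectation (run Obs \<pi> x n [(Some i, Some (x i))])
          (\<lambda>\<tau>. if \<tau> \<noteq> [] \<and> fst (hd \<tau>) = a then \<phi> (take 1 \<tau>) else 0)
      = (if Some i = a then \<phi> [(Some i, Some (x i))] else 0)" for i
    by (rule integral_pmf_eq_const) (auto dest!: set_run_prefix)
  have summand: "pmf (\<pi> (obs Obs x) []) a' *
          (case a' of None \<Rightarrow> (if [(None, None)] \<noteq> [] \<and> fst (hd [(None, None)]) = a
                                  then \<phi> (take 1 [(None, None)]) else 0)
                    | Some i \<Rightarrow> measure_pmf.expectation (run Obs \<pi> x n [(Some i, Some (x i))])
                        (\<lambda>\<tau>. if \<tau> \<noteq> [] \<and> fst (hd \<tau>) = a then \<phi> (take 1 \<tau>) else 0))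
      = (if a' = a then pmf (\<pi> (obs Obs x) []) a * \<phi> [(a, map_option x a)] else 0)" for a'
    by (cases a') (auto simp: continuation)
  show ?thesis
    unfolding integral_run_Suc append_Nil summand by simp
qed

lemma integral_run_first_step:
  fixes Cost :: "('f::finite \<Rightarrow> 'v option) \<Rightarrow> ('f, 'v) hist \<Rightarrow> 'y \<Rightarrow> real"
  shows "measure_pmf.expectation (run Obs \<pi> x (Suc n) []) (\<lambda>\<tau>. Cost (obs Obs x) \<tau> y)
       = (\<Sum>a\<in>UNIV. pmf (\<pi> (obs Obs x) []) a * po_mean Obs (Suc n) \<pi> Cost x y [(a, map_option x a)])"
  unfolding integral_run_Suc
  by (intro sum.cong refl arg_cong[where f = "(*) _"]) (auto simp: po_mean_def split: option.splits)

lemma finite_set_psemi: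
  "finite (set_pmf (psemi Obs T (pXY :: (('f::finite \<Rightarrow> 'v::finite) \<times> 'y::finite) pmf) \<beta> \<pi>sim'))"
  unfolding psemi_def by (auto simp: set_bind_pmf intro!: finite_set_run)

lemma integral_psemi:
  fixes H :: "('f::finite \<Rightarrow> 'v::finite) \<times> 'y::finite \<times> 'f set \<times> ('f, 'v) hist \<Rightarrow> real"
  shows "measure_pmf.expectation (psemi Obs T pXY \<beta> \<pi>sim') H
    = measure_pmf.expectation pXY (\<lambda>(x, y). measure_pmf.expectation (\<beta> x) (\<lambda>r.
         measure_pmf.expectation (run Obs (\<pi>sim' r) x T []) (\<lambda>\<tau>. H (x, y, r, \<tau>))))"
  unfolding psemi_def
  by (subst integral_bind_pmf_finite)
     (auto simp: set_bind_pmf split_beta integral_bind_pmf_finite finite_set_run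
       intro!: Bochner_Integration.integral_cong)

definition first_action_prob ::
  "'f set \<Rightarrow> (('f \<Rightarrow> 'v) \<Rightarrow> 'f set pmf) \<Rightarrow> ('f set \<Rightarrow> ('f, 'v) policy) \<Rightarrow> ('f \<Rightarrow> 'v) \<Rightarrow> 'f option \<Rightarrow> real"
  where "first_action_prob Obs \<beta> \<pi>sim' x a =
           measure_pmf.expectation (\<beta> x) (\<lambda>r. pmf (\<pi>sim' r (obs Obs x) []) a)"

lemma integral_psemi_first_action:
  fixes w :: "('f::finite \<Rightarrow> 'v::finite) \<Rightarrow> 'y::finite \<Rightarrow> ('f, 'v) hist \<Rightarrow> real"
  shows "measure_pmf.expectation (psemi Obs (Suc n) pXY \<beta> \<pi>sim')
           (\<lambda>z. indicator (qevent Obs [] a x0) z * (case z of (x, y, r, \<tau>) \<Rightarrow> w x y (take 1 \<tau>)))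
       = measure_pmf.expectation pXY (\<lambda>(x, y). indicator {x. obs Obs x = x0} x
           * first_action_prob Obs \<beta> \<pi>sim' x a * w x y [(a, map_option x a)])"
proof -
  have "measure_pmf.expectation (run Obs (\<pi>sim' r) x (Suc n) [])
          (\<lambda>\<tau>. indicator (qevent Obs [] a x0) (x, y, r, \<tau>) * w x y (take 1 \<tau>))
      = pmf (\<pi>sim' r (obs Obs x) []) a * (indicator {x. obs Obs x = x0} x * w x y [(a, map_option x a)])"
    for x y r
  proof -
    have "(\<lambda>\<tau>. indicator (qevent Obs [] a x0) (x, y, r, \<tau>) * w x y (take 1 \<tau>))
        = (\<lambda>\<tau>. if \<tau> \<noteq> [] \<and> fst (hd \<tau>) = a
                then indicator {x. obs Obs x = x0} x * w x y (take 1 \<tau>) else 0)"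
      by (rule ext) (auto simp: qevent_def indicator_def hd_conv_nth neq_Nil_conv)
    then show ?thesis
      using integral_run_first_action[where \<phi> = "\<lambda>ht. indicator {x. obs Obs x = x0} x * w x y ht"]
      by simp
  qed
  then show ?thesis
    unfolding integral_psemi first_action_prob_def
    by (auto simp: split_beta mult_ac intro!: Bochner_Integration.integral_cong)
qed

lemma Q_semi_eq_ratio:
  "Q_semi Obs T (pXY :: (('f::finite \<Rightarrow> 'v::finite) \<times> 'y::finite) pmf) \<beta> \<pi>sim' \<pi>\<^sub>\<alpha> Cost h a x0
   = measure_pmf.expectation (psemi Obs T pXY \<beta> \<pi>sim')
        (\<lambda>z. indicator (qevent Obs h a x0) z *
              (case z of (x, y, r, \<tau>) \<Rightarrow> po_mean Obs T \<pi>\<^sub>\<alpha> Cost x y (take (Suc (length h)) \<tau>)))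
     / measure_pmf.prob (psemi Obs T pXY \<beta> \<pi>sim') (qevent Obs h a x0)"
proof (cases "set_pmf (psemi Obs T pXY \<beta> \<pi>sim') \<inter> qevent Obs h a x0 = {}")
  case True
  then have "measure_pmf.prob (psemi Obs T pXY \<beta> \<pi>sim') (qevent Obs h a x0) = 0"
    by (simp add: measure_pmf_zero_iff)
  with True show ?thesis unfolding Q_semi_def by (simp add: Let_def)
next
  case False
  then show ?thesis unfolding Q_semi_def Let_def
    by (simp add: integral_cond_pmf_finite[OF finite_set_psemi] split_beta')
qed

lemma Q_semi_first_step:
  fixes pXY :: "(('f::finite \<Rightarrow> 'v::finite) \<times> 'y::finite) pmf"
  assumes MAR: "\<And>x x'. obs Obs x = obs Obs x' \<Longrightarrow> \<beta> x = \<beta> x'"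
    and supp: "(x, y) \<in> set_pmf pXY"
    and pos: "first_action_prob Obs \<beta> \<pi>sim' x a \<noteq> 0"
  shows "Q_semi Obs (Suc n) pXY \<beta> \<pi>sim' \<pi>\<^sub>\<alpha> Cost [] a (obs Obs x)
       = measure_pmf.expectation (cond_pmf pXY ((\<lambda>z. obs Obs (fst z)) -` {obs Obs x}))
           (\<lambda>(x', y'). po_mean Obs (Suc n) \<pi>\<^sub>\<alpha> Cost x' y' [(a, map_option x' a)])"
proof -
  define c where "c = first_action_prob Obs \<beta> \<pi>sim' x a"
  define E :: "(('f \<Rightarrow> 'v) \<times> 'y) set" where "E = (\<lambda>z. obs Obs (fst z)) -` {obs Obs x}"
  define G where "G = (\<lambda>(x', y'). po_mean Obs (Suc n) \<pi>\<^sub>\<alpha> Cost x' y' [(a, map_option x' a)])"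
  define p' where "p' = psemi Obs (Suc n) pXY \<beta> \<pi>sim'"
  define Q :: "(('f \<Rightarrow> 'v) \<times> 'y \<times> 'f set \<times> ('f, 'v) hist) set"
    where "Q = qevent Obs [] a (obs Obs x)"
  \<comment> \<open>By MAR the first-action weight is constant on the event \<open>X_o = obs Obs x\<close>.\<close>
  have c: "indicator {x'. obs Obs x' = obs Obs x} x' * first_action_prob Obs \<beta> \<pi>sim' x' a
      = c * indicator E (x', y')" for x' y'
  proof (cases "obs Obs x' = obs Obs x")
    case True
    then show ?thesis by (simp add: c_def E_def first_action_prob_def MAR[OF True])
  qed (simp add: E_def)
  have num: "measure_pmf.expectation p' (\<lambda>z. indicator Q z *
          (case z of (x', y', r, \<tau>) \<Rightarrow> po_mean Obs (Suc n) \<pi>\<^sub>\<alpha> Cost x' y' (take (Suc 0) \<tau>)))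
      = c * measure_pmf.expectation pXY (\<lambda>z. indicator E z * G z)"
  proof -
    have "(\<lambda>(x', y'). indicator {x'. obs Obs x' = obs Obs x} x' * first_action_prob Obs \<beta> \<pi>sim' x' a
            * po_mean Obs (Suc n) \<pi>\<^sub>\<alpha> Cost x' y' [(a, map_option x' a)])
        = (\<lambda>z. c * (indicator E z * G z))"
      by (auto simp: c G_def)
    then show ?thesis
      using integral_psemi_first_action[where w = "po_mean Obs (Suc n) \<pi>\<^sub>\<alpha> Cost"]
      by (simp add: p'_def Q_def)
  qed
  have den: "measure_pmf.prob p' Q = c * measure_pmf.prob pXY E"
  proof -
    have "measure_pmf.prob p' Q = measure_pmf.expectation pXY
            (\<lambda>(x', y'). indicator {x'. obs Obs x' = obs Obs x} x' * first_action_prob Obs \<beta> \<pi>sim' x' a)"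
      using integral_psemi_first_action[where w = "\<lambda>_ _ _. 1"] by (simp add: p'_def Q_def)
    also have "\<dots> = measure_pmf.expectation pXY (\<lambda>z. c * indicator E z)"
      by (rule arg_cong[where f = "measure_pmf.expectation pXY"]) (auto simp: c)
    finally show ?thesis by simp
  qed
  have "Q_semi Obs (Suc n) pXY \<beta> \<pi>sim' \<pi>\<^sub>\<alpha> Cost [] a (obs Obs x)
      = measure_pmf.expectation pXY (\<lambda>z. indicator E z * G z) / measure_pmf.prob pXY E"
    using pos unfolding Q_semi_eq_ratio p'_def[symmetric] Q_def[symmetric]
    by (simp add: num den c_def)
  also have "\<dots> = measure_pmf.expectation (cond_pmf pXY E) G"
    using supp by (subst integral_cond_pmf_finite) (auto simp: E_def)
  finally show ?thesis by (simp add: E_def G_def)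
qed

lemma first_action_prob_pos:
  fixes \<pi>\<^sub>\<alpha> \<pi>sim :: "('f::finite, 'v) policy"
  assumes blocked_pos: "\<And>r x0 h a. a \<in> set_pmf (\<pi>sim x0 h) \<Longrightarrow> (\<forall>i. a = Some i \<longrightarrow> i \<in> r)
                         \<Longrightarrow> a \<in> set_pmf (\<pi>sim' r x0 h)"
    and offpolicy_pos: "\<And>x0 h a. a \<in> set_pmf (\<pi>\<^sub>\<alpha> x0 h) \<Longrightarrow> a \<in> set_pmf (\<pi>sim x0 h)"
    and semioffline_pos: "\<And>\<tau>. \<tau> \<in> set_pmf (run Obs \<pi>\<^sub>\<alpha> x (Suc n) [])
                         \<Longrightarrow> measure_pmf.prob (\<beta> x) {r. acquired \<tau> \<subseteq> r} > 0"
    and a: "a \<in> set_pmf (\<pi>\<^sub>\<alpha> (obs Obs x) [])"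
  shows "first_action_prob Obs \<beta> \<pi>sim' x a > 0"
proof -
  obtain \<tau> where \<tau>: "\<tau> \<in> set_pmf (run Obs \<pi>\<^sub>\<alpha> x (Suc n) [])" and a_acquired: "\<forall>i. a = Some i \<longrightarrow> i \<in> acquired \<tau>"
  proof (cases a)
    case None
    then show ?thesis using that a by (force simp: set_bind_pmf)
  next
    case (Some i)
    obtain \<tau> where "\<tau> \<in> set_pmf (run Obs \<pi>\<^sub>\<alpha> x n [(Some i, Some (x i))])"
      using set_pmf_not_empty by fast
    moreover from this have "i \<in> acquired \<tau>"
      by (auto dest!: set_run_prefix simp: acquired_def)
    ultimately show ?thesis using that a Some by (force simp: set_bind_pmf)
  qed
  obtain r where r: "r \<in> set_pmf (\<beta> x)" "acquired \<tau> \<subseteq> r"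
    using semioffline_pos[OF \<tau>] measure_pmf_zero_iff[of "\<beta> x" "{r. acquired \<tau> \<subseteq> r}"] by auto
  have "a \<in> set_pmf (\<pi>sim' r (obs Obs x) [])"
    using r a_acquired by (intro blocked_pos offpolicy_pos a) auto
  then have "0 < (\<Sum>r'\<in>UNIV. pmf (\<pi>sim' r' (obs Obs x) []) a * pmf (\<beta> x) r')"
    using r by (intro sum_pos2[of UNIV r]) (auto simp: pmf_positive)
  then show ?thesis
    unfolding first_action_prob_def by (subst integral_measure_pmf_real[of UNIV]) auto
qed

lemma integral_V0_Q_semi:
  fixes pXY :: "(('f::finite \<Rightarrow> 'v::finite) \<times> 'y::finite) pmf"
    and \<pi>\<^sub>\<alpha> \<pi>sim :: "('f, 'v) policy"
  assumes MAR: "\<And>x x'. obs Obs x = obs Obs x' \<Longrightarrow> \<beta> x = \<beta> x'"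
    and blocked_pos: "\<And>r x0 h a. a \<in> set_pmf (\<pi>sim x0 h) \<Longrightarrow> (\<forall>i. a = Some i \<longrightarrow> i \<in> r)
                         \<Longrightarrow> a \<in> set_pmf (\<pi>sim' r x0 h)"
    and offpolicy_pos: "\<And>x0 h a. a \<in> set_pmf (\<pi>\<^sub>\<alpha> x0 h) \<Longrightarrow> a \<in> set_pmf (\<pi>sim x0 h)"
    and semioffline_pos: "\<And>x y \<tau>. (x, y) \<in> set_pmf pXY \<Longrightarrow> \<tau> \<in> set_pmf (run Obs \<pi>\<^sub>\<alpha> x (Suc n) [])
                         \<Longrightarrow> measure_pmf.prob (\<beta> x) {r. acquired \<tau> \<subseteq> r} > 0"
  shows "measure_pmf.expectation (psemi Obs (Suc n) pXY \<beta> \<pi>sim')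
           (\<lambda>(x, y, r, \<tau>). V0 \<pi>\<^sub>\<alpha> (Q_semi Obs (Suc n) pXY \<beta> \<pi>sim' \<pi>\<^sub>\<alpha> Cost) (obs Obs x))
       = J_val Obs (Suc n) pXY \<pi>\<^sub>\<alpha> Cost"
proof -
  define g where "g z = obs Obs (fst z)" for z :: "('f \<Rightarrow> 'v) \<times> 'y"
  define \<pi> where "\<pi> a z = pmf (\<pi>\<^sub>\<alpha> (g z) []) a" for a z
  define G where "G a = (\<lambda>(x, y). po_mean Obs (Suc n) \<pi>\<^sub>\<alpha> Cost x y [(a, map_option x a)])" for a
  define C where "C a z = measure_pmf.expectation (cond_pmf pXY (g -` {g z})) (G a)" for a z
  have fin: "finite (set_pmf pXY)" by simp
  have V0_eq: "V0 \<pi>\<^sub>\<alpha> (Q_semi Obs (Suc n) pXY \<beta> \<pi>sim' \<pi>\<^sub>\<alpha> Cost) (g z) = (\<Sum>a\<in>UNIV. \<pi> a z * C a z)"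
    if z: "z \<in> set_pmf pXY" for z
    unfolding V0_def
  proof (intro sum.cong refl)
    fix a
    obtain x y where xy: "z = (x, y)" by (cases z)
    show "Q_semi Obs (Suc n) pXY \<beta> \<pi>sim' \<pi>\<^sub>\<alpha> Cost [] a (g z) * pmf (\<pi>\<^sub>\<alpha> (g z) []) a = \<pi> a z * C a z"
    proof (cases "a \<in> set_pmf (\<pi>\<^sub>\<alpha> (g z) [])")
      case True
      have pos: "first_action_prob Obs \<beta> \<pi>sim' x a > 0"
        using True z xy
        by (intro first_action_prob_pos[OF blocked_pos offpolicy_pos semioffline_pos]) (auto simp: g_def)
      then have "Q_semi Obs (Suc n) pXY \<beta> \<pi>sim' \<pi>\<^sub>\<alpha> Cost [] a (g z) = C a z"
        using Q_semi_first_step[OF MAR z[unfolded xy], where \<pi>sim' = \<pi>sim' and a = a]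
        unfolding C_def G_def g_def xy fst_conv by simp
      then show ?thesis by (simp add: \<pi>_def)
    qed (simp add: \<pi>_def set_pmf_iff)
  qed
  have "measure_pmf.expectation (psemi Obs (Suc n) pXY \<beta> \<pi>sim')
          (\<lambda>(x, y, r, \<tau>). V0 \<pi>\<^sub>\<alpha> (Q_semi Obs (Suc n) pXY \<beta> \<pi>sim' \<pi>\<^sub>\<alpha> Cost) (obs Obs x))
      = measure_pmf.expectation pXY (\<lambda>z. V0 \<pi>\<^sub>\<alpha> (Q_semi Obs (Suc n) pXY \<beta> \<pi>sim' \<pi>\<^sub>\<alpha> Cost) (g z))"
    by (simp add: integral_psemi g_def split_beta')
  also have "\<dots> = measure_pmf.expectation pXY (\<lambda>z. \<Sum>a\<in>UNIV. \<pi> a z * C a z)"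
    using V0_eq by (intro integral_cong_AE) (auto simp: AE_measure_pmf_iff)
  also have "\<dots> = (\<Sum>a\<in>UNIV. measure_pmf.expectation pXY (\<lambda>z. \<pi> a z * C a z))"
    by (simp add: integrable_measure_pmf_finite)
  also have "\<dots> = (\<Sum>a\<in>UNIV. measure_pmf.expectation pXY (\<lambda>z. \<pi> a z * G a z))"
    unfolding \<pi>_def C_def by (intro sum.cong refl integral_cond_pmf_tower fin)
  also have "\<dots> = measure_pmf.expectation pXY (\<lambda>z. \<Sum>a\<in>UNIV. \<pi> a z * G a z)"
    by (simp add: integrable_measure_pmf_finite)
  also have "\<dots> = J_val Obs (Suc n) pXY \<pi>\<^sub>\<alpha> Cost"
    unfolding J_val_def integral_run_first_step by (simp add: \<pi>_def G_def g_def split_beta')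
  finally show ?thesis .
qed

lemma sample_mean_deviation_Hoeffding:
  fixes F :: "'a \<Rightarrow> real" and S :: "nat \<Rightarrow> 's \<Rightarrow> 'a"
  assumes M: "prob_space M"
    and S_meas: "\<And>i. S i \<in> measurable M N"
    and S_dist: "\<And>i. distr M N (S i) = N"
    and S_indep: "prob_space.indep_vars M (\<lambda>_. N) S UNIV"
    and F_meas: "F \<in> borel_measurable N"
    and F_bounded: "\<And>s. \<bar>F s\<bar> \<le> B"
    and \<epsilon>: "\<epsilon> > 0" and n: "n > 0"
  shows "measure M {\<omega> \<in> space M. \<bar>(\<Sum>i<n. F (S i \<omega>)) / real n - integral\<^sup>L N F\<bar> > \<epsilon>}
       \<le> 2 * exp (- 2 * real n * \<epsilon>\<^sup>2 / (2 * B + 2)\<^sup>2)"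
proof -
  interpret prob_space M by (rule M)
  define X where "X i \<omega> = F (S i \<omega>)" for i \<omega>
  have rv: "random_variable borel (X i)" for i
    using measurable_comp[OF S_meas F_meas] unfolding X_def comp_def .
  have distr_X: "distr M borel (X i) = distr N borel F" for i
    using distr_distr[OF F_meas S_meas[of i]] unfolding X_def by (simp add: comp_def S_dist)
  have mean: "expectation (X 0) = integral\<^sup>L N F"
    using integral_distr[OF S_meas F_meas] unfolding X_def by (simp add: S_dist)
  interpret Hoeffding_ineq_iid M "{..<n}" X "X 0" "- B - 1" "B + 1" "expectation (X 0)"
  proof unfold_locales
    have "indep_vars (\<lambda>_. borel) X UNIV"
      using indep_vars_compose2[OF S_indep, of "\<lambda>_. F" "\<lambda>_. borel"] F_meas
      unfolding X_def by simp
    then show "indep_vars (\<lambda>_. borel) X {..<n}"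
      by (rule indep_vars_subset) simp
    show "AE x in M. X 0 x \<in> {- B - 1..B + 1}"
    proof (rule AE_I2)
      fix x show "X 0 x \<in> {- B - 1..B + 1}"
        using F_bounded[of "S 0 x"] by (simp add: X_def abs_le_iff)
    qed
  qed (simp_all add: distr_X rv)
  have B: "- B - 1 < B + 1" using F_bounded[of undefined] by linarith
  have "measure M {\<omega> \<in> space M. \<bar>(\<Sum>i<n. X i \<omega>) / real n - integral\<^sup>L N F\<bar> > \<epsilon>}
      \<le> measure M {\<omega> \<in> space M. \<bar>(\<Sum>i\<in>{..<n}. X i \<omega>) / real (card {..<n}) - expectation (X 0)\<bar> \<ge> \<epsilon>}"
    unfolding mean card_lessThan using rv by (intro finite_measure_mono) auto
  also have "\<dots> \<le> 2 * exp (- 2 * real (card {..<n}) * \<epsilon>\<^sup>2 / (B + 1 - (- B - 1))\<^sup>2)"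
    using \<epsilon> B n by (intro Hoeffding_ineq_abs_ge') auto
  finally show ?thesis unfolding X_def by simp
qed

lemma sample_mean_tendsto_in_probability:
  fixes F :: "'a \<Rightarrow> real" and S :: "nat \<Rightarrow> 's \<Rightarrow> 'a"
  assumes M: "prob_space M"
    and S_meas: "\<And>i. S i \<in> measurable M N"
    and S_dist: "\<And>i. distr M N (S i) = N"
    and S_indep: "prob_space.indep_vars M (\<lambda>_. N) S UNIV"
    and F_meas: "F \<in> borel_measurable N"
    and F_bounded: "\<And>s. \<bar>F s\<bar> \<le> B"
    and \<epsilon>: "\<epsilon> > 0"
  shows "(\<lambda>n. measure M {\<omega> \<in> space M. \<bar>(\<Sum>i<n. F (S i \<omega>)) / real n - integral\<^sup>L N F\<bar> > \<epsilon>})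
           \<longlonglongrightarrow> 0"
proof (rule tendsto_sandwich[OF _ _ tendsto_const])
  define c where "c = 2 * \<epsilon>\<^sup>2 / (2 * B + 2)\<^sup>2"
  have "c > 0"
    using \<epsilon> F_bounded[of undefined] by (simp add: c_def)
  then have "(\<lambda>n. 2 * exp (- c) ^ n) \<longlonglongrightarrow> 0"
    by (intro tendsto_mult_right_zero LIMSEQ_power_zero) simp
  moreover have "exp (- c) ^ n = exp (- 2 * real n * \<epsilon>\<^sup>2 / (2 * B + 2)\<^sup>2)" for n
    by (simp add: exp_of_nat_mult[symmetric] c_def)
  ultimately show "(\<lambda>n. 2 * exp (- 2 * real n * \<epsilon>\<^sup>2 / (2 * B + 2)\<^sup>2)) \<longlonglongrightarrow> 0"
    by simp
  show "\<forall>\<^sub>F n in sequentially. measure M {\<omega> \<in> space M. \<bar>(\<Sum>i<n. F (S i \<omega>)) / real n - integral\<^sup>L N F\<bar> > \<epsilon>}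
        \<le> 2 * exp (- 2 * real n * \<epsilon>\<^sup>2 / (2 * B + 2)\<^sup>2)"
    using eventually_gt_at_top[of 0]
    by eventually_elim (rule sample_mean_deviation_Hoeffding[OF assms])
qed simp

theorem theorem6:
  fixes Obs :: "'f::finite set"
    and T :: nat
    and pXY :: "(('f \<Rightarrow> 'v::finite) \<times> 'y::finite) pmf"
    and \<beta> :: "('f \<Rightarrow> 'v) \<Rightarrow> 'f set pmf"
    and \<pi>\<^sub>\<alpha> \<pi>sim :: "('f, 'v) policy"
    and \<pi>sim' :: "'f set \<Rightarrow> ('f, 'v) policy"
    and Cost :: "('f \<Rightarrow> 'v option) \<Rightarrow> ('f, 'v) hist \<Rightarrow> 'y \<Rightarrow> real"
    and Qm :: "('f, 'v) hist \<Rightarrow> 'f option \<Rightarrow> ('f \<Rightarrow> 'v option) \<Rightarrow> real"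
    and M :: "'s measure"
    and S :: "nat \<Rightarrow> 's \<Rightarrow> ('f \<Rightarrow> 'v) \<times> 'y \<times> 'f set \<times> ('f, 'v) hist"
  assumes horizon: "0 < T"
    and MAR: "\<And>x x'. obs Obs x = obs Obs x' \<Longrightarrow> \<beta> x = \<beta> x'"
    and always_observed: "\<And>x r. r \<in> set_pmf (\<beta> x) \<Longrightarrow> Obs \<subseteq> r"
    and blocked: "\<And>r x0 h i. Some i \<in> set_pmf (\<pi>sim' r x0 h) \<Longrightarrow> i \<in> r"
    and blocked_pos: "\<And>r x0 h a. a \<in> set_pmf (\<pi>sim x0 h) \<Longrightarrow> (\<forall>i. a = Some i \<longrightarrow> i \<in> r)
                         \<Longrightarrow> a \<in> set_pmf (\<pi>sim' r x0 h)"
    and offpolicy_pos: "\<And>x0 h a. a \<in> set_pmf (\<pi>\<^sub>\<alpha> x0 h) \<Longrightarrow> a \<in> set_pmf (\<pi>sim x0 h)"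
    and semioffline_pos: "\<And>x y \<tau>. (x, y) \<in> set_pmf pXY \<Longrightarrow> \<tau> \<in> set_pmf (run Obs \<pi>\<^sub>\<alpha> x T [])
                         \<Longrightarrow> measure_pmf.prob (\<beta> x) {r. acquired \<tau> \<subseteq> r} > 0"
    and Q_correct: "\<And>h a x0. Qm h a x0 = Q_semi Obs T pXY \<beta> \<pi>sim' \<pi>\<^sub>\<alpha> Cost h a x0"
    and M_prob: "prob_space M"
    and S_meas: "\<And>i. S i \<in> measurable M (measure_pmf (psemi Obs T pXY \<beta> \<pi>sim'))"
    and S_dist: "\<And>i. distr M (measure_pmf (psemi Obs T pXY \<beta> \<pi>sim')) (S i)
                       = measure_pmf (psemi Obs T pXY \<beta> \<pi>sim')"
    and S_indep: "prob_space.indep_vars M (\<lambda>_. measure_pmf (psemi Obs T pXY \<beta> \<pi>sim')) S UNIV"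
  shows "measure_pmf.expectation (psemi Obs T pXY \<beta> \<pi>sim')
            (\<lambda>(x, y, r, \<tau>). V0 \<pi>\<^sub>\<alpha> Qm (obs Obs x)) = J_val Obs T pXY \<pi>\<^sub>\<alpha> Cost
         \<and> (\<forall>\<epsilon>>0. (\<lambda>n. measure M {\<omega> \<in> space M.
               \<bar>(\<Sum>i<n. V0 \<pi>\<^sub>\<alpha> Qm (obs Obs (fst (S i \<omega>)))) / real n - J_val Obs T pXY \<pi>\<^sub>\<alpha> Cost\<bar> > \<epsilon>})
             \<longlonglongrightarrow> 0)"
proof -
  obtain n where T: "T = Suc n" using horizon by (cases T) auto
  have Qm: "Qm = Q_semi Obs T pXY \<beta> \<pi>sim' \<pi>\<^sub>\<alpha> Cost"
    using Q_correct by (intro ext) simp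
  have identification: "measure_pmf.expectation (psemi Obs T pXY \<beta> \<pi>sim')
      (\<lambda>(x, y, r, \<tau>). V0 \<pi>\<^sub>\<alpha> Qm (obs Obs x)) = J_val Obs T pXY \<pi>\<^sub>\<alpha> Cost"
    unfolding Qm T
    by (rule integral_V0_Q_semi[OF MAR blocked_pos offpolicy_pos semioffline_pos[unfolded T]])
  define B where "B = Max (range (\<lambda>x. \<bar>V0 \<pi>\<^sub>\<alpha> Qm (obs Obs x)\<bar>))"
  have bounded: "\<bar>V0 \<pi>\<^sub>\<alpha> Qm (obs Obs (fst s))\<bar> \<le> B" for s
    unfolding B_def by (rule Max_ge) auto
  show ?thesis
    using identification sample_mean_tendsto_in_probability[where F = "\<lambda>s. V0 \<pi>\<^sub>\<alpha> Qm (obs Obs (fst s))",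
        OF M_prob S_meas S_dist S_indep _ bounded]
    by (simp add: split_beta')
qed

end
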